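(* Let $X\in\mathrm{St}(n,k)$ and $\xi=(\xi_1,\xi_2)\in\mathfrak{so}(n)\times\mathfrak{so}(k)$. The horizontal lift through $q(0)=(I_n,I_k)$ of $\widehat\beta(t)=(\iota_X\circ\pi)(\exp(t\xi))=e^{t\xi_1}Xe^{-t\xi_2}$ is $$q(t)=\exp(t\xi)\exp(-t\xi_{\mathfrak h})=\big(e^{t\xi_1}e^{-t\xi_{1,\mathfrak h}},\,e^{t\xi_2}e^{-t\xi_{2,\mathfrak h}}\big),$$ and it is the solution of $\dot q(t)=d_{(I_n,I_k)}L_{q(t)}\,\mathrm{Ad}_{\exp(t\xi_{\mathfrak h})}(\xi_{\mathfrak p})$, $q(0)=(I_n,I_k)$.
   Context: $\mathrm{St}(n,k)=\{Y\in\mathbb{R}^{n\times k}:Y^\top Y=I_k\}$; $G=O(n)\times O(k)$ acts by $(R,\theta)\cdot Y=RY\theta^\top$, $H$ is the stabilizer of $X$, $\pi\colon G\to G/H$, $\iota_X((R,\theta)H)=RX\theta^\top$. On $\mathfrak g=\mathfrak{so}(n)\times\mathfrak{so}(k)$ the scalar product is $\langle(\Omega_1,\Psi_1),(\Omega_2,\Psi_2)\rangle=-\operatorname{tr}(\Omega_1\Omega_2)+2\operatorname{tr}(\Psi_1\Psi_2)$; $\mathfrak h=\{(\Omega,\eta):\Omega X=X\eta\}$, $\mathfrak p=\mathfrak h^\perp$, $\mathfrak g=\mathfrak h\oplus\mathfrak p$, and $\xi_{\mathfrak h}=(\xi_{1,\mathfrak h},\xi_{2,\mathfrak h})$, $\xi_{\mathfrak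 p}$ are the components of $\xi$. A horizontal lift of $\widehat\beta$ is a curve $q$ in $G$ with $(\iota_X\circ\pi)(q(t))=\widehat\beta(t)$ and $q(t)^{-1}\dot q(t)\in\mathfrak p$. *)

theory Defs
  imports "HOL-Analysis.Analysis"
begin

type_synonym ('n,'k) gelt = "(real^'n^'n) \<times> (real^'k^'k)"

fun mpow :: "real^'n^'n \<Rightarrow> nat \<Rightarrow> real^'n^'n" where
  "mpow A 0 = mat 1"
| "mpow A (Suc m) = A ** mpow A m"

definition mexp :: "real^'n^'n \<Rightarrow> real^'n^'n" where
  "mexp A = (\<Sum>m. (1 / fact m) *\<^sub>R mpow A m)"

definition stiefel :: "(real^'k^'n) set" where
  "stiefel = {Y. transpose Y ** Y = mat 1}"

definition skew :: "real^'n^'n \<Rightarrow> bool" where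
  "skew A \<longleftrightarrow> transpose A = - A"

definition gip :: "('n::finite,'k::finite) gelt \<Rightarrow> ('n::finite,'k::finite) gelt \<Rightarrow> real" where
  "gip a b = - trace (fst a ** fst b) + 2 * trace (snd a ** snd b)"

definition hlie :: "real^'k^'n \<Rightarrow> ('n::finite,'k::finite) gelt set" where
  "hlie X = {(\<Omega>, \<eta>). skew \<Omega> \<and> skew \<eta> \<and> \<Omega> ** X = X ** \<eta>}"

definition plie :: "real^'k^'n \<Rightarrow> ('n::finite,'k::finite) gelt set" where
  "plie X = {(\<Omega>, \<Psi>). skew \<Omega> \<and> skew \<Psi> \<and> (\<forall>z\<in>hlie X. gip (\<Omega>, \<Psi>) z = 0)}"

definition hcomp :: "real^'k^'n \<Rightarrow> ('n::finite,'k::finite) gelt \<Rightarrow> ('n::finite,'k::finite) gelt" where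
  "hcomp X \<xi> = (THE \<zeta>. \<zeta> \<in> hlie X \<and> (fst \<xi> - fst \<zeta>, snd \<xi> - snd \<zeta>) \<in> plie X)"

definition pcomp :: "real^'k^'n \<Rightarrow> ('n::finite,'k::finite) gelt \<Rightarrow> ('n::finite,'k::finite) gelt" where
  "pcomp X \<xi> = (fst \<xi> - fst (hcomp X \<xi>), snd \<xi> - snd (hcomp X \<xi>))"

definition iotapi :: "real^'k^'n \<Rightarrow> ('n::finite,'k::finite) gelt \<Rightarrow> real^'k^'n" where
  "iotapi X g = fst g ** X ** transpose (snd g)"

definition gmul :: "('n::finite,'k::finite) gelt \<Rightarrow> ('n::finite,'k::finite) gelt \<Rightarrow> ('n::finite,'k::finite) gelt" where
  "gmul a b = (fst a ** fst b, snd a ** snd b)"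

definition ginv :: "('n::finite,'k::finite) gelt \<Rightarrow> ('n::finite,'k::finite) gelt" where
  "ginv a = (matrix_inv (fst a), matrix_inv (snd a))"

definition Gset :: "('n::finite,'k::finite) gelt set" where
  "Gset = {g. orthogonal_matrix (fst g) \<and> orthogonal_matrix (snd g)}"

definition gexp :: "('n::finite,'k::finite) gelt \<Rightarrow> ('n::finite,'k::finite) gelt" where
  "gexp \<xi> = (mexp (fst \<xi>), mexp (snd \<xi>))"

definition gscale :: "real \<Rightarrow> ('n::finite,'k::finite) gelt \<Rightarrow> ('n::finite,'k::finite) gelt" where
  "gscale t \<xi> = (t *\<^sub>R fst \<xi>, t *\<^sub>R snd \<xi>)"

definition Ad :: "('n::finite,'k::finite) gelt \<Rightarrow> ('n::finite,'k::finite) gelt \<Rightarrow> ('n::finite,'k::finite) gelt" where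
  "Ad g \<zeta> = gmul (gmul g \<zeta>) (ginv g)"

definition dL :: "('n::finite,'k::finite) gelt \<Rightarrow> ('n::finite,'k::finite) gelt \<Rightarrow> ('n::finite,'k::finite) gelt" where
  "dL q \<zeta> = gmul q \<zeta>"

definition gone :: "('n::finite,'k::finite) gelt" where
  "gone = (mat 1, mat 1)"

definition curve_deriv :: "(real \<Rightarrow> ('n::finite,'k::finite) gelt) \<Rightarrow> (real \<Rightarrow> ('n::finite,'k::finite) gelt) \<Rightarrow> bool" where
  "curve_deriv q q' \<longleftrightarrow> (\<forall>t. ((\<lambda>s. fst (q s)) has_vector_derivative fst (q' t)) (at t) \<and>
                             ((\<lambda>s. snd (q s)) has_vector_derivative snd (q' t)) (at t))"

definition horizontal_lift :: "real^'k^'n \<Rightarrow> (real \<Rightarrow> real^'k^'n) \<Rightarrow> ('n::finite,'k::finite) gelt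
   \<Rightarrow> (real \<Rightarrow> ('n::finite,'k::finite) gelt) \<Rightarrow> bool" where
  "horizontal_lift X bhat q0 q \<longleftrightarrow> q 0 = q0 \<and> (\<forall>t. q t \<in> Gset) \<and>
     (\<exists>q'. curve_deriv q q' \<and> (\<forall>t. iotapi X (q t) = bhat t \<and> gmul (ginv (q t)) (q' t) \<in> plie X))"

end

theory Submission
  imports Defs
begin

text \<open>Write \<open>\<xi> = \<xi>\<^sub>h + \<xi>\<^sub>p\<close>. Since \<open>exp (-t \<xi>\<^sub>h)\<close> lies in the stabilizer
  \<open>H\<close> of \<open>X\<close>, the curve \<open>q t = exp (t \<xi>) exp (-t \<xi>\<^sub>h)\<close> has the same image under
  \<open>\<iota>\<^sub>X \<circ> \<pi>\<close> as \<open>exp (t \<xi>)\<close>, and \<open>q\<^sup>-\<^sup>1 q' = Ad (exp (t \<xi>\<^sub>h)) \<xi>\<^sub>p\<close>. This lies in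
  \<open>p\<close>, because \<open>Ad\<close> of an element of \<open>H\<close> preserves \<open>h\<close> and the scalar product, hence
  also \<open>p = h\<^sup>\<bottom>\<close>. If \<open>r\<close> is another horizontal lift, \<open>s = q\<^sup>-\<^sup>1 r\<close> is a curve in
  \<open>H\<close>; differentiating \<open>s\<^sub>1 X = X s\<^sub>2\<close> puts \<open>s\<^sup>-\<^sup>1 s'\<close> into \<open>h\<close>, while
  \<open>s\<^sup>-\<^sup>1 s' = r\<^sup>-\<^sup>1 r' - Ad (s\<^sup>-\<^sup>1) (q\<^sup>-\<^sup>1 q')\<close> lies in \<open>p\<close>. As \<open>h \<inter> p = 0\<close>, \<open>s\<close> is
  constant. For the differential equation, \<open>r q\<^sup>T\<close> has derivative
  \<open>r V q\<^sup>T + r V\<^sup>T q\<^sup>T = 0\<close> because \<open>V\<close> is skew.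

  Both \<open>h \<inter> p = 0\<close> and the existence of \<open>\<xi>\<^sub>h\<close> come from the explicit description
  \<open>p = {(\<alpha>, \<beta>) skew. X\<^sup>T \<alpha> X = 2 \<beta> \<and> Q \<alpha> Q = 0}\<close> with \<open>Q = I - X X\<^sup>T\<close>, obtained by
  testing against the elements \<open>(X \<eta> X\<^sup>T, \<eta>)\<close> and \<open>(Q A Q, 0)\<close> of \<open>h\<close>.\<close>

section \<open>Matrix algebra\<close>

lemma matrix_add_rdistrib: "((A::'a::semiring_1^'n^'m) + B) ** C = A ** C + B ** C"
  by (vector matrix_matrix_mult_def sum.distrib[symmetric] distrib_right)

lemma matrix_diff_ldistrib: "(A::'a::ring_1^'n^'m) ** (B - C) = A ** B - A ** C"
  by (vector matrix_matrix_mult_def sum_subtractf[symmetric] right_diff_distrib)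

lemma matrix_diff_rdistrib: "((A::'a::ring_1^'n^'m) - B) ** C = A ** C - B ** C"
  by (vector matrix_matrix_mult_def sum_subtractf[symmetric] left_diff_distrib)

lemma matrix_uminus_left: "(- A::'a::ring_1^'n^'m) ** B = - (A ** B)"
  by (vector matrix_matrix_mult_def sum_negf[symmetric])

lemma matrix_uminus_right: "(A::'a::ring_1^'n^'m) ** (- B) = - (A ** B)"
  by (vector matrix_matrix_mult_def sum_negf[symmetric])

lemma matrix_mul_assoc_eq: "A ** B = C \<Longrightarrow> A ** (B ** D) = C ** D"
  by (metis matrix_mul_assoc)

lemma transpose_add: "transpose ((A::'a::semiring_1^'n^'m) + B) = transpose A + transpose B"
  by (simp add: transpose_def vec_eq_iff)

lemma transpose_diff: "transpose ((A::'a::ring_1^'n^'m) - B) = transpose A - transpose B"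
  by (simp add: transpose_def vec_eq_iff)

lemma transpose_uminus: "transpose (- (A::'a::ring_1^'n^'m)) = - transpose A"
  by (simp add: transpose_def vec_eq_iff)

lemma trace_zero [simp]: "trace (0::'a::semiring_1^'n^'n) = 0"
  by (simp add: trace_def)

lemma trace_scaleR: "trace (c *\<^sub>R (A::real^'n^'n)) = c * trace A"
  by (simp add: trace_def sum_distrib_left)

lemma trace_conjugate:
  "trace ((R::real^'n^'m) ** A ** transpose R ** B) = trace (A ** (transpose R ** B ** R))"
  using trace_mul_sym[of R "A ** transpose R ** B"] by (simp add: matrix_mul_assoc)

lemma orthogonal_matrix_cancel:
  assumes "orthogonal_matrix (Q::real^'n^'n)"
  shows "transpose Q ** (Q ** Y) = Y" "Q ** (transpose Q ** Y) = Y"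
  using assms by (simp_all add: orthogonal_matrix_def matrix_mul_assoc)

lemma matrix_inv_orthogonal: "orthogonal_matrix (R::real^'n^'n) \<Longrightarrow> matrix_inv R = transpose R"
  unfolding matrix_inv_def
proof (rule some_equality)
  assume R: "orthogonal_matrix R"
  then show "R ** transpose R = mat 1 \<and> transpose R ** R = mat 1"
    by (simp add: orthogonal_matrix_def)
  fix A assume "R ** A = mat 1 \<and> A ** R = mat 1"
  then show "A = transpose R"
    using orthogonal_matrix_cancel(1)[OF R, of A] by simp
qed

lemma skew_add: "skew A \<Longrightarrow> skew B \<Longrightarrow> skew (A + B)"
  by (simp add: skew_def transpose_add)

lemma skew_diff: "skew A \<Longrightarrow> skew B \<Longrightarrow> skew (A - B)"
  by (simp add: skew_def transpose_diff)

lemma skew_zero: "skew 0"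
  by (simp add: skew_def transpose_def vec_eq_iff)

lemma skew_scaleR: "skew A \<Longrightarrow> skew (c *\<^sub>R A)"
  by (simp add: skew_def transpose_scalar)

lemma skew_conjugate: "skew A \<Longrightarrow> skew (B ** A ** transpose B)"
  by (simp add: skew_def matrix_transpose_mul matrix_mul_assoc matrix_uminus_left matrix_uminus_right)

lemma skew_trace_square_eq_0:
  assumes skew: "skew (S::real^'n^'n)" and trace: "trace (S ** S) = 0"
  shows "S = 0"
proof -
  have "S $ i $ j * S $ j $ i = - (S $ i $ j)\<^sup>2" for i j
  proof -
    have "S $ j $ i = transpose S $ i $ j" by (simp add: transpose_def)
    then show ?thesis using skew by (simp add: skew_def power2_eq_square)
  qed
  then have "trace (S ** S) = - (\<Sum>i\<in>UNIV. \<Sum>j\<in>UNIV. (S $ i $ j)\<^sup>2)"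
    by (simp add: trace_def matrix_matrix_mult_def sum_negf)
  then have "\<forall>i j. (S $ i $ j)\<^sup>2 = 0"
    using trace by (simp add: sum_nonneg_eq_0_iff sum_nonneg)
  then show ?thesis by (simp add: vec_eq_iff)
qed

lemma bounded_bilinear_matrix_mult:
  "bounded_bilinear ((**) :: real^'n^'m \<Rightarrow> real^'p^'n \<Rightarrow> real^'p^'m)"
proof -
  have "bilinear ((**) :: real^'n^'m \<Rightarrow> real^'p^'n \<Rightarrow> real^'p^'m)"
    unfolding bilinear_def
    by (auto intro!: linearI simp: matrix_add_ldistrib matrix_add_rdistrib
        scalar_matrix_assoc matrix_scalar_ac)
  then show ?thesis by (rule bilinear_conv_bounded_bilinear[THEN iffD1])
qed

lemma bounded_linear_matrix_mult_left: "bounded_linear (\<lambda>M::real^'n^'m. M ** (X::real^'p^'n))"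
  by (rule bounded_bilinear.bounded_linear_left[OF bounded_bilinear_matrix_mult])

lemma bounded_linear_matrix_mult_right: "bounded_linear (\<lambda>M::real^'p^'n. (X::real^'n^'m) ** M)"
  by (rule bounded_bilinear.bounded_linear_right[OF bounded_bilinear_matrix_mult])

lemma bounded_linear_transpose: "bounded_linear (transpose :: real^'n^'m \<Rightarrow> real^'m^'n)"
  by (rule linear_conv_bounded_linear[THEN iffD1], rule linearI) (simp_all add: transpose_def vec_eq_iff)

lemma has_vector_derivative_matrix_mult:
  assumes "(f has_vector_derivative f') (at t)" "(g has_vector_derivative g') (at t)"
  shows "((\<lambda>t. (f t :: real^'n^'m) ** (g t :: real^'p^'n)) has_vector_derivative
           f t ** g' + f' ** g t) (at t)"
  by (rule bounded_bilinear.has_vector_derivative[OF bounded_bilinear_matrix_mult assms])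

lemma has_vector_derivative_transpose:
  "(f has_vector_derivative f') (at t) \<Longrightarrow>
   ((\<lambda>t. transpose (f t :: real^'n^'m)) has_vector_derivative transpose f') (at t)"
  by (rule bounded_linear.has_vector_derivative[OF bounded_linear_transpose])

lemma intertwining_has_vector_derivative:
  fixes f :: "real \<Rightarrow> real^'n^'n" and g :: "real \<Rightarrow> real^'k^'k"
  assumes "(f has_vector_derivative f') (at t)" "(g has_vector_derivative g') (at t)"
    and "\<And>t. f t ** X = X ** g t"
  shows "f' ** X = X ** g'"
proof -
  have "((\<lambda>t. f t ** X - X ** g t) has_vector_derivative f' ** X - X ** g') (at t)"
    by (intro has_vector_derivative_diff
        bounded_linear.has_vector_derivative[OF bounded_linear_matrix_mult_left assms(1)]
        bounded_linear.has_vector_derivative[OF bounded_linear_matrix_mult_right assms(2)])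
  moreover have "((\<lambda>t. f t ** X - X ** g t) has_vector_derivative 0) (at t)"
    using assms(3) by simp
  ultimately show ?thesis
    using vector_derivative_unique_at by fastforce
qed

section \<open>The matrix exponential\<close>

text \<open>The ring structure of \<^typ>\<open>real^'n^'n\<close> is componentwise, so square matrices
  under matrix multiplication and the operator norm get a type of their own.\<close>

typedef ('n::finite) sqmat = "UNIV :: (real^'n^'n) set" by auto

setup_lifting type_definition_sqmat

instantiation sqmat :: (finite) real_normed_vector
begin
lift_definition zero_sqmat :: "'a sqmat" is 0 .
lift_definition plus_sqmat :: "'a sqmat \<Rightarrow> 'a sqmat \<Rightarrow> 'a sqmat" is "(+)" .
lift_definition minus_sqmat :: "'a sqmat \<Rightarrow> 'a sqmat \<Rightarrow> 'a sqmat" is "(-)" .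
lift_definition uminus_sqmat :: "'a sqmat \<Rightarrow> 'a sqmat" is uminus .
lift_definition scaleR_sqmat :: "real \<Rightarrow> 'a sqmat \<Rightarrow> 'a sqmat" is scaleR .
lift_definition norm_sqmat :: "'a sqmat \<Rightarrow> real" is "\<lambda>A. onorm ((*v) A)" .
definition dist_sqmat :: "'a sqmat \<Rightarrow> 'a sqmat \<Rightarrow> real"
  where "dist_sqmat a b = norm (a - b)"
definition
  "(uniformity :: ('a sqmat \<times> 'a sqmat) filter) = (INF e\<in>{0 <..}. principal {(x, y). dist x y < e})"
definition open_sqmat :: "'a sqmat set \<Rightarrow> bool"
  where "open_sqmat S = (\<forall>x\<in>S. \<forall>\<^sub>F (x', y) in uniformity. x' = x \<longrightarrow> y \<in> S)"
definition sgn_sqmat :: "'a sqmat \<Rightarrow> 'a sqmat"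
  where "sgn_sqmat x = scaleR (inverse (norm x)) x"
instance
proof
  fix a b :: "'a sqmat" and r s :: real
  show "a + b + c = a + (b + c)" for c by transfer (simp add: algebra_simps)
  show "a + b = b + a" by transfer (simp add: algebra_simps)
  show "0 + a = a" by transfer simp
  show "- a + a = 0" by transfer simp
  show "a - b = a + - b" by transfer simp
  show "r *\<^sub>R (a + b) = r *\<^sub>R a + r *\<^sub>R b" by transfer (simp add: algebra_simps)
  show "(r + s) *\<^sub>R a = r *\<^sub>R a + s *\<^sub>R a" by transfer (simp add: algebra_simps)
  show "r *\<^sub>R s *\<^sub>R a = (r * s) *\<^sub>R a" by transfer simp
  show "1 *\<^sub>R a = a" by transfer simp
  show "dist a b = norm (a - b)" by (simp add: dist_sqmat_def)
  show "sgn a = inverse (norm a) *\<^sub>R a" by (simp add: sgn_sqmat_def)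
  show "(uniformity :: ('a sqmat \<times> 'a sqmat) filter) =
      (INF e\<in>{0 <..}. principal {(x, y). dist x y < e})"
    by (simp add: uniformity_sqmat_def)
  show "open U = (\<forall>x\<in>U. \<forall>\<^sub>F (x', y) in uniformity. x' = x \<longrightarrow> y \<in> U)"
    for U :: "'a sqmat set"
    by (simp add: open_sqmat_def)
  show "(norm a = 0) = (a = 0)"
    by transfer (metis onorm_eq_0 matrix_vector_mul_bounded_linear matrix_vector_mult_0 matrix_eq)
  show "norm (a + b) \<le> norm a + norm b"
  proof transfer
    fix a b :: "real^'a^'a"
    have "(*v) (a + b) = (\<lambda>x. a *v x + b *v x)"
      by (simp add: fun_eq_iff matrix_vector_mult_add_rdistrib)
    then show "onorm ((*v) (a + b)) \<le> onorm ((*v) a) + onorm ((*v) b)"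
      using onorm_triangle[OF matrix_vector_mul_bounded_linear matrix_vector_mul_bounded_linear]
      by simp
  qed
  show "norm (r *\<^sub>R a) = \<bar>r\<bar> * norm a"
  proof transfer
    fix a :: "real^'a^'a" and r :: real
    have "(*v) (r *\<^sub>R a) = (\<lambda>x. r *\<^sub>R (a *v x))"
      by (simp add: fun_eq_iff scaleR_matrix_vector_assoc)
    then show "onorm ((*v) (r *\<^sub>R a)) = \<bar>r\<bar> * onorm ((*v) a)"
      using onorm_scaleR[OF matrix_vector_mul_bounded_linear] by simp
  qed
qed
end

instantiation sqmat :: (finite) real_normed_algebra_1
begin
lift_definition one_sqmat :: "'a sqmat" is "mat 1" .
lift_definition times_sqmat :: "'a sqmat \<Rightarrow> 'a sqmat \<Rightarrow> 'a sqmat" is "(**)" .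
instance
proof
  fix a b c :: "'a sqmat" and r :: real
  show "a * b * c = a * (b * c)" by transfer (simp add: matrix_mul_assoc)
  show "1 * a = a" by transfer simp
  show "a * 1 = a" by transfer simp
  show "(a + b) * c = a * c + b * c" by transfer (simp add: matrix_add_rdistrib)
  show "a * (b + c) = a * b + a * c" by transfer (simp add: matrix_add_ldistrib)
  show "(0::'a sqmat) \<noteq> 1" by transfer (simp add: mat_def vec_eq_iff)
  show "r *\<^sub>R a * b = r *\<^sub>R (a * b)" by transfer (simp add: scalar_matrix_assoc)
  show "a * r *\<^sub>R b = r *\<^sub>R (a * b)" by transfer (simp add: matrix_scalar_ac scalar_matrix_assoc)
  show "norm (1::'a sqmat) = 1"
  proof transfer
    have "(*v) (mat 1 :: real^'a^'a) = (\<lambda>x. x)" by (simp add: fun_eq_iff)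
    then show "onorm ((*v) (mat 1 :: real^'a^'a)) = 1" by (simp add: onorm_id)
  qed
  show "norm (a * b) \<le> norm a * norm b"
  proof transfer
    fix a b :: "real^'a^'a"
    have "(*v) (a ** b) = (*v) a \<circ> (*v) b" by (simp add: fun_eq_iff matrix_vector_mul_assoc)
    then show "onorm ((*v) (a ** b)) \<le> onorm ((*v) a) * onorm ((*v) b)"
      using onorm_compose[OF matrix_vector_mul_bounded_linear matrix_vector_mul_bounded_linear]
      by simp
  qed
qed
end

lemma norm_matrix_le_sum_entries: "norm (A::real^'n^'m) \<le> (\<Sum>i\<in>UNIV. \<Sum>j\<in>UNIV. \<bar>A $ i $ j\<bar>)"
proof -
  have "norm A \<le> (\<Sum>i\<in>UNIV. norm (A $ i))"
    unfolding norm_vec_def by (rule L2_set_le_sum) simp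
  also have "\<dots> \<le> (\<Sum>i\<in>UNIV. \<Sum>j\<in>UNIV. \<bar>A $ i $ j\<bar>)"
    by (intro sum_mono norm_le_l1_cart)
  finally show ?thesis .
qed

lemma abs_matrix_entry_le_norm: "\<bar>(A::real^'n^'m) $ i $ j\<bar> \<le> norm A"
  by (meson component_le_norm_cart Finite_Cartesian_Product.norm_nth_le order_trans)

lemma bounded_linear_Rep_sqmat: "bounded_linear (Rep_sqmat :: 'n::finite sqmat \<Rightarrow> _)"
proof (rule bounded_linear_intro[where K = "real CARD('n) * real CARD('n)"])
  fix x y :: "'n sqmat" and r :: real
  show "Rep_sqmat (x + y) = Rep_sqmat x + Rep_sqmat y" by transfer simp
  show "Rep_sqmat (r *\<^sub>R x) = r *\<^sub>R Rep_sqmat x" by transfer simp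
  have "norm (Rep_sqmat x) \<le> (\<Sum>i\<in>UNIV. \<Sum>j\<in>UNIV. \<bar>Rep_sqmat x $ i $ j\<bar>)"
    by (rule norm_matrix_le_sum_entries)
  also have "\<dots> \<le> (\<Sum>i\<in>(UNIV::'n set). \<Sum>j\<in>(UNIV::'n set). norm x)"
    by (intro sum_mono) (simp add: norm_sqmat.rep_eq matrix_component_le_onorm)
  finally show "norm (Rep_sqmat x) \<le> norm x * (real CARD('n) * real CARD('n))"
    by (simp add: ac_simps)
qed

lemma bounded_linear_Abs_sqmat: "bounded_linear (Abs_sqmat :: _ \<Rightarrow> 'n::finite sqmat)"
proof (rule bounded_linear_intro[where K = "real CARD('n) * real CARD('n)"])
  fix x y :: "real^'n^'n" and r :: real
  show "Abs_sqmat (x + y) = Abs_sqmat x + Abs_sqmat y" by (simp add: plus_sqmat.abs_eq)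
  show "Abs_sqmat (r *\<^sub>R x) = r *\<^sub>R Abs_sqmat x" by (simp add: scaleR_sqmat.abs_eq)
  have "norm (Abs_sqmat x) \<le> (\<Sum>i\<in>UNIV. \<Sum>j\<in>UNIV. \<bar>x $ i $ j\<bar>)"
    by (simp add: norm_sqmat.abs_eq onorm_le_matrix_component_sum)
  also have "\<dots> \<le> (\<Sum>i\<in>(UNIV::'n set). \<Sum>j\<in>(UNIV::'n set). norm x)"
    by (intro sum_mono abs_matrix_entry_le_norm)
  finally show "norm (Abs_sqmat x) \<le> norm x * (real CARD('n) * real CARD('n))"
    by (simp add: ac_simps)
qed

instance sqmat :: (finite) banach
proof
  fix X :: "nat \<Rightarrow> 'a sqmat"
  assume "Cauchy X"
  then have "Cauchy (\<lambda>n. Rep_sqmat (X n))"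
    by (rule bounded_linear.Cauchy[OF bounded_linear_Rep_sqmat])
  then obtain L where "(\<lambda>n. Rep_sqmat (X n)) \<longlonglongrightarrow> L"
    using Cauchy_convergent_iff convergent_def by blast
  then have "(\<lambda>n. Abs_sqmat (Rep_sqmat (X n))) \<longlonglongrightarrow> Abs_sqmat L"
    by (rule bounded_linear.tendsto[OF bounded_linear_Abs_sqmat])
  then show "convergent X" by (auto simp: Rep_sqmat_inverse convergent_def)
qed

lemma mpow_eq_Rep_sqmat_power: "mpow A m = Rep_sqmat (Abs_sqmat A ^ m)"
  by (induction m) (simp_all add: times_sqmat.rep_eq one_sqmat.rep_eq Abs_sqmat_inverse)

lemma mexp_sums: "(\<lambda>m. (1 / fact m) *\<^sub>R mpow A m) sums mexp A"
  and mexp_eq_Rep_sqmat_exp: "mexp A = Rep_sqmat (exp (Abs_sqmat A))"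
proof -
  have "(\<lambda>m. Rep_sqmat (Abs_sqmat A ^ m /\<^sub>R fact m)) sums Rep_sqmat (exp (Abs_sqmat A))"
    by (rule bounded_linear.sums[OF bounded_linear_Rep_sqmat exp_converges])
  then have *: "(\<lambda>m. (1 / fact m) *\<^sub>R mpow A m) sums Rep_sqmat (exp (Abs_sqmat A))"
    by (simp add: mpow_eq_Rep_sqmat_power scaleR_sqmat.rep_eq divide_inverse_commute)
  then show "mexp A = Rep_sqmat (exp (Abs_sqmat A))"
    unfolding mexp_def by (rule sums_unique[symmetric])
  with * show "(\<lambda>m. (1 / fact m) *\<^sub>R mpow A m) sums mexp A" by simp
qed

lemma mexp_transfer:
  assumes "bounded_linear L1" "bounded_linear L2" "\<And>m. L1 (mpow A m) = L2 (mpow B m)"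
  shows "L1 (mexp A) = L2 (mexp B)"
proof -
  have "(\<lambda>m. L1 ((1 / fact m) *\<^sub>R mpow A m)) sums L1 (mexp A)"
    by (rule bounded_linear.sums[OF assms(1) mexp_sums])
  moreover have "(\<lambda>m. L2 ((1 / fact m) *\<^sub>R mpow B m)) sums L2 (mexp B)"
    by (rule bounded_linear.sums[OF assms(2) mexp_sums])
  moreover have "(\<lambda>m. L1 ((1 / fact m) *\<^sub>R mpow A m)) = (\<lambda>m. L2 ((1 / fact m) *\<^sub>R mpow B m))"
    using assms by (simp add: linear_scale bounded_linear.linear)
  ultimately show ?thesis using sums_unique2 by metis
qed

lemma mpow_intertwine:
  assumes "A ** X = X ** B"
  shows "mpow A m ** X = X ** mpow B m"
proof (induction m)
  case 0
  then show ?case by simp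
next
  case (Suc m)
  have "mpow A (Suc m) ** X = A ** (mpow A m ** X)" by (simp add: matrix_mul_assoc)
  also have "\<dots> = (A ** X) ** mpow B m" by (simp add: Suc matrix_mul_assoc)
  also have "\<dots> = X ** mpow B (Suc m)" by (simp add: assms matrix_mul_assoc)
  finally show ?case .
qed

lemma mexp_intertwine: "A ** X = X ** B \<Longrightarrow> mexp A ** X = X ** mexp B"
  by (rule mexp_transfer[OF bounded_linear_matrix_mult_left bounded_linear_matrix_mult_right
        mpow_intertwine])

lemma mpow_transpose: "transpose (mpow A m) = mpow (transpose A) m"
proof (induction m)
  case 0
  then show ?case by simp
next
  case (Suc m)
  have "transpose (mpow A (Suc m)) = mpow (transpose A) m ** transpose A"
    by (simp add: matrix_transpose_mul Suc)
  also have "\<dots> = transpose A ** mpow (transpose A) m"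
    using mpow_intertwine[of "transpose A" "transpose A" "transpose A" m] by simp
  finally show ?case by simp
qed

lemma mexp_transpose: "transpose (mexp A) = mexp (transpose A)"
  using mexp_transfer[OF bounded_linear_transpose bounded_linear_ident, of A "transpose A"]
  by (simp add: mpow_transpose)

lemma mexp_zero: "mexp 0 = mat 1"
  by (simp add: mexp_eq_Rep_sqmat_exp zero_sqmat_def[symmetric] one_sqmat.rep_eq)

lemma mexp_uminus_inverse: "mexp A ** mexp (- A) = mat 1" "mexp (- A) ** mexp A = mat 1"
proof -
  have "mexp B ** mexp (- B) = mat 1" for B :: "real^'n^'n"
    using exp_minus_inverse[of "Abs_sqmat B"]
    by (simp add: mexp_eq_Rep_sqmat_exp uminus_sqmat.abs_eq times_sqmat.rep_eq[symmetric]
        one_sqmat.rep_eq)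
  from this[of A] this[of "- A"] show "mexp A ** mexp (- A) = mat 1" "mexp (- A) ** mexp A = mat 1"
    by simp_all
qed

lemma has_vector_derivative_mexp:
  "((\<lambda>t. mexp (t *\<^sub>R A)) has_vector_derivative mexp (t *\<^sub>R A) ** A) (at t)"
proof -
  have "((\<lambda>t. Rep_sqmat (exp (t *\<^sub>R Abs_sqmat A))) has_vector_derivative
      Rep_sqmat (exp (t *\<^sub>R Abs_sqmat A) * Abs_sqmat A)) (at t)"
    by (rule bounded_linear.has_vector_derivative[OF bounded_linear_Rep_sqmat
          exp_scaleR_has_vector_derivative_right])
  then show ?thesis
    by (simp add: mexp_eq_Rep_sqmat_exp scaleR_sqmat.abs_eq times_sqmat.rep_eq Abs_sqmat_inverse)
qed

lemma transpose_mexp_skew: "skew S \<Longrightarrow> transpose (mexp S) = mexp (- S)"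
  by (simp add: mexp_transpose skew_def)

lemma orthogonal_matrix_mexp: "skew S \<Longrightarrow> orthogonal_matrix (mexp S)"
  by (simp add: orthogonal_matrix_def transpose_mexp_skew mexp_uminus_inverse)

section \<open>The stabilizer of \<open>X\<close> and the splitting of the Lie algebra\<close>

definition stabilizer :: "real^'k^'n \<Rightarrow> ('n::finite,'k::finite) gelt set" where
  "stabilizer X = {g \<in> Gset. iotapi X g = X}"

lemma ginv_Gset: "g \<in> Gset \<Longrightarrow> ginv g = (transpose (fst g), transpose (snd g))"
  by (simp add: Gset_def ginv_def matrix_inv_orthogonal)

lemma Gset_ginv: "g \<in> Gset \<Longrightarrow> ginv g \<in> Gset"
  by (simp add: ginv_Gset Gset_def)

lemma Gset_gmul: "g \<in> Gset \<Longrightarrow> h \<in> Gset \<Longrightarrow> gmul g h \<in> Gset"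
  by (simp add: Gset_def gmul_def orthogonal_matrix_mul)

lemma gmul_ginv_cancel:
  assumes "g \<in> Gset"
  shows "gmul (ginv g) (gmul g z) = z" "gmul g (gmul (ginv g) z) = z"
  using assms by (simp_all add: ginv_Gset gmul_def Gset_def orthogonal_matrix_cancel)

lemma Ad_Gset:
  "g \<in> Gset \<Longrightarrow> Ad g z = (fst g ** fst z ** transpose (fst g), snd g ** snd z ** transpose (snd g))"
  by (simp add: Ad_def gmul_def ginv_Gset)

lemma gip_Ad: "g \<in> Gset \<Longrightarrow> gip (Ad g z) w = gip z (Ad (ginv g) w)"
  by (simp add: gip_def Ad_Gset ginv_Gset Gset_def trace_conjugate)

lemma stabilizer_iff: "g \<in> stabilizer X \<longleftrightarrow> g \<in> Gset \<and> fst g ** X = X ** snd g"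
proof (cases "g \<in> Gset")
  case True
  then have \<theta>: "orthogonal_matrix (snd g)" by (simp add: Gset_def)
  have "fst g ** X ** transpose (snd g) = X \<longleftrightarrow> fst g ** X = X ** snd g"
  proof
    assume "fst g ** X ** transpose (snd g) = X"
    then show "fst g ** X = X ** snd g"
      by (metis \<theta> matrix_mul_assoc matrix_mul_rid orthogonal_matrix_def)
  next
    assume "fst g ** X = X ** snd g"
    then show "fst g ** X ** transpose (snd g) = X"
      by (metis \<theta> matrix_mul_assoc matrix_mul_rid orthogonal_matrix_def)
  qed
  then show ?thesis using True by (simp add: stabilizer_def iotapi_def)
qed (simp add: stabilizer_def)

lemma stabilizer_ginv:
  assumes "g \<in> stabilizer X"
  shows "ginv g \<in> stabilizer X"
proof -
  have G: "g \<in> Gset" and X: "fst g ** X ** transpose (snd g) = X"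
    using assms by (simp_all add: stabilizer_def iotapi_def)
  then have "transpose (fst g) ** X ** snd g = transpose (fst g) ** (fst g ** X ** transpose (snd g)) ** snd g"
    by simp
  also have "\<dots> = X"
    using G by (simp add: Gset_def matrix_mul_assoc[symmetric] orthogonal_matrix_cancel
        orthogonal_matrix_def)
  finally show ?thesis
    using G by (simp add: stabilizer_def iotapi_def ginv_Gset Gset_def)
qed

lemma iotapi_gmul_stabilizer:
  assumes "h \<in> stabilizer X"
  shows "iotapi X (gmul g h) = iotapi X g"
proof -
  have "iotapi X (gmul g h) = fst g ** iotapi X h ** transpose (snd g)"
    by (simp add: iotapi_def gmul_def matrix_transpose_mul matrix_mul_assoc)
  also have "\<dots> = iotapi X g"
    using assms by (simp add: stabilizer_def iotapi_def)
  finally show ?thesis .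
qed

lemma gmul_ginv_in_stabilizer:
  assumes q: "q \<in> Gset" and r: "r \<in> Gset" and iota: "iotapi X r = iotapi X q"
  shows "gmul (ginv q) r \<in> stabilizer X"
proof -
  have "iotapi X (gmul (ginv q) r) = transpose (fst q) ** iotapi X r ** snd q"
    using q by (simp add: iotapi_def gmul_def ginv_Gset matrix_transpose_mul matrix_mul_assoc)
  also have "\<dots> = X"
    using q by (simp add: iota)
      (simp add: iotapi_def Gset_def matrix_mul_assoc[symmetric] orthogonal_matrix_cancel
        orthogonal_matrix_def)
  finally show ?thesis
    using q r by (simp add: stabilizer_def Gset_gmul Gset_ginv)
qed

lemma hlie_iff: "z \<in> hlie X \<longleftrightarrow> skew (fst z) \<and> skew (snd z) \<and> fst z ** X = X ** snd z"
  by (cases z) (simp add: hlie_def)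

lemma plie_skew: "z \<in> plie X \<Longrightarrow> skew (fst z) \<and> skew (snd z)"
  by (cases z) (simp add: plie_def)

lemma hlie_add: "z \<in> hlie X \<Longrightarrow> w \<in> hlie X \<Longrightarrow> z + w \<in> hlie X"
  by (simp add: hlie_iff skew_add matrix_add_rdistrib matrix_add_ldistrib)

lemma hlie_diff: "z \<in> hlie X \<Longrightarrow> w \<in> hlie X \<Longrightarrow> z - w \<in> hlie X"
  by (simp add: hlie_iff skew_diff matrix_diff_rdistrib matrix_diff_ldistrib)

lemma gip_diff_left: "gip (z - w) u = gip z u - gip w u"
  by (simp add: gip_def matrix_diff_rdistrib trace_sub)

lemma plie_diff: "z \<in> plie X \<Longrightarrow> w \<in> plie X \<Longrightarrow> z - w \<in> plie X"
  by (cases z, cases w) (auto simp: plie_def skew_diff gip_diff_left[of "(_, _)" "(_, _)", simplified])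

lemma hlie_Ad:
  assumes g: "g \<in> stabilizer X" and z: "z \<in> hlie X"
  shows "Ad g z \<in> hlie X"
proof -
  have G: "g \<in> Gset" and gX: "fst g ** X = X ** snd g" and gX': "transpose (fst g) ** X = X ** transpose (snd g)"
    using g stabilizer_ginv[OF g] by (simp_all add: stabilizer_iff ginv_Gset)
  have "fst g ** fst z ** transpose (fst g) ** X = X ** (snd g ** snd z ** transpose (snd g))"
    using z by (simp add: hlie_iff matrix_mul_assoc[symmetric] gX' matrix_mul_assoc_eq[OF gX])
        (simp add: matrix_mul_assoc gX)
  then show ?thesis
    using z G by (simp add: hlie_iff Ad_Gset skew_conjugate)
qed

lemma plie_Ad:
  assumes g: "g \<in> stabilizer X" and z: "z \<in> plie X"
  shows "Ad g z \<in> plie X"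
proof -
  have G: "g \<in> Gset" using g by (simp add: stabilizer_def)
  have "gip (Ad g z) w = 0" if w: "w \<in> hlie X" for w
  proof -
    have "Ad (ginv g) w \<in> hlie X" by (rule hlie_Ad[OF stabilizer_ginv[OF g] w])
    then have "gip z (Ad (ginv g) w) = 0" using z by (cases z) (simp add: plie_def)
    then show ?thesis by (simp add: gip_Ad[OF G])
  qed
  moreover have "skew (fst (Ad g z))" "skew (snd (Ad g z))"
    using z G by (simp_all add: plie_skew Ad_Gset skew_conjugate)
  ultimately show ?thesis
    by (cases "Ad g z") (simp add: plie_def)
qed

definition perp_proj :: "real^'k^'n \<Rightarrow> real^'n^'n" where
  "perp_proj X = mat 1 - X ** transpose X"

definition hproj_snd :: "real^'k^'n \<Rightarrow> ('n::finite,'k::finite) gelt \<Rightarrow> real^'k^'k" where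
  "hproj_snd X \<xi> = 2 *\<^sub>R snd \<xi> - transpose X ** fst \<xi> ** X"

definition hproj :: "real^'k^'n \<Rightarrow> ('n::finite,'k::finite) gelt \<Rightarrow> ('n::finite,'k::finite) gelt" where
  "hproj X \<xi> = (X ** hproj_snd X \<xi> ** transpose X + perp_proj X ** fst \<xi> ** perp_proj X,
                 hproj_snd X \<xi>)"

lemma transpose_perp_proj: "transpose (perp_proj X) = perp_proj X"
  by (simp add: perp_proj_def transpose_diff matrix_transpose_mul)

lemma Pair_diff_fst_snd: "(fst z - fst w, snd z - snd w) = z - w"
  by (simp add: prod_eq_iff)

lemma pcomp_eq: "pcomp X \<xi> = \<xi> - hcomp X \<xi>"
  by (simp add: pcomp_def Pair_diff_fst_snd)

context
  fixes X :: "real^'k^'n"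
  assumes X: "X \<in> stiefel"
begin

lemma stiefel_orthonormal: "transpose X ** X = mat 1"
  using X by (simp add: stiefel_def)

lemma stiefel_cancel: "transpose X ** (X ** Y) = Y"
  by (simp add: matrix_mul_assoc stiefel_orthonormal)

lemma perp_proj_mult_X: "perp_proj X ** X = 0" "perp_proj X ** (X ** Y) = 0"
  by (simp_all add: perp_proj_def matrix_diff_rdistrib matrix_mul_assoc[symmetric] stiefel_cancel
      stiefel_orthonormal)

lemma transpose_X_mult_perp_proj: "transpose X ** perp_proj X = 0" "transpose X ** (perp_proj X ** Y) = 0"
  by (simp_all add: perp_proj_def matrix_diff_ldistrib matrix_diff_rdistrib matrix_mul_assoc[symmetric]
      stiefel_cancel)

lemma perp_proj_idem: "perp_proj X ** perp_proj X = perp_proj X"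
    "perp_proj X ** (perp_proj X ** Y) = perp_proj X ** Y"
proof -
  show *: "perp_proj X ** perp_proj X = perp_proj X"
    by (subst (2) perp_proj_def) (simp add: matrix_diff_ldistrib matrix_mul_assoc perp_proj_mult_X)
  show "perp_proj X ** (perp_proj X ** Y) = perp_proj X ** Y"
    by (rule matrix_mul_assoc_eq[OF *])
qed

lemmas perp_proj_simps =
  perp_proj_mult_X transpose_X_mult_perp_proj perp_proj_idem stiefel_cancel stiefel_orthonormal

lemma hlie_decomp:
  assumes "(\<Omega>, \<mu>) \<in> hlie X"
  shows "\<Omega> = X ** \<mu> ** transpose X + perp_proj X ** \<Omega> ** perp_proj X"
proof -
  have sk: "skew \<Omega>" "skew \<mu>" and \<Omega>X: "\<Omega> ** X = X ** \<mu>"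
    using assms by (auto simp: hlie_def)
  have "transpose X ** \<Omega> = transpose (transpose \<Omega> ** X)"
    by (simp add: matrix_transpose_mul)
  also have "\<dots> = \<mu> ** transpose X"
    using sk \<Omega>X by (simp add: skew_def matrix_uminus_left matrix_transpose_mul transpose_uminus)
  finally have X\<Omega>: "transpose X ** \<Omega> = \<mu> ** transpose X" .
  have "perp_proj X ** \<Omega> ** perp_proj X = \<Omega> - X ** \<mu> ** transpose X"
    by (simp add: perp_proj_def matrix_diff_ldistrib matrix_diff_rdistrib matrix_mul_assoc[symmetric]
        X\<Omega> matrix_mul_assoc_eq[OF X\<Omega>] matrix_mul_assoc_eq[OF \<Omega>X] stiefel_cancel)
  then show ?thesis by simp
qed

lemma gip_hlie:
  assumes "(\<Omega>, \<mu>) \<in> hlie X"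
  shows "gip (\<alpha>, \<beta>) (\<Omega>, \<mu>) =
    trace ((2 *\<^sub>R \<beta> - transpose X ** \<alpha> ** X) ** \<mu>) - trace (perp_proj X ** \<alpha> ** perp_proj X ** \<Omega>)"
proof -
  have "trace (\<alpha> ** \<Omega>) = trace (\<alpha> ** (X ** \<mu> ** transpose X)) + trace (\<alpha> ** (perp_proj X ** \<Omega> ** perp_proj X))"
    by (subst hlie_decomp[OF assms]) (simp add: matrix_add_ldistrib trace_add)
  also have "\<dots> = trace (transpose X ** \<alpha> ** X ** \<mu>) + trace (perp_proj X ** \<alpha> ** perp_proj X ** \<Omega>)"
    using trace_mul_sym[of "\<alpha> ** X ** \<mu>" "transpose X"]
      trace_mul_sym[of "\<alpha> ** perp_proj X ** \<Omega>" "perp_proj X"]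
    by (simp add: matrix_mul_assoc)
  finally show ?thesis
    by (simp add: gip_def matrix_diff_rdistrib scalar_matrix_assoc[symmetric] trace_sub trace_scaleR)
qed

lemma hlie_range: "skew \<eta> \<Longrightarrow> (X ** \<eta> ** transpose X, \<eta>) \<in> hlie X"
  using skew_conjugate[of \<eta> X] by (simp add: hlie_def matrix_mul_assoc[symmetric] stiefel_orthonormal)

lemma hlie_perp: "skew A \<Longrightarrow> (perp_proj X ** A ** perp_proj X, 0) \<in> hlie X"
  using skew_conjugate[of A "perp_proj X"]
  by (simp add: hlie_def skew_zero transpose_perp_proj matrix_mul_assoc[symmetric] perp_proj_mult_X)

lemma plie_iff:
  "(\<alpha>, \<beta>) \<in> plie X \<longleftrightarrow> skew \<alpha> \<and> skew \<beta> \<and>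
     transpose X ** \<alpha> ** X = 2 *\<^sub>R \<beta> \<and> perp_proj X ** \<alpha> ** perp_proj X = 0"
proof
  assume "(\<alpha>, \<beta>) \<in> plie X"
  then have sk: "skew \<alpha>" "skew \<beta>" and orth: "\<And>z. z \<in> hlie X \<Longrightarrow> gip (\<alpha>, \<beta>) z = 0"
    by (auto simp: plie_def)
  define \<eta> where "\<eta> = 2 *\<^sub>R \<beta> - transpose X ** \<alpha> ** X"
  have sk\<eta>: "skew \<eta>"
    using sk skew_conjugate[of \<alpha> "transpose X"] by (simp add: \<eta>_def skew_diff skew_scaleR)
  have "trace (perp_proj X ** \<alpha> ** perp_proj X ** (X ** \<eta> ** transpose X)) = 0"
    by (simp add: matrix_mul_assoc[symmetric] perp_proj_simps)
  then have "trace (\<eta> ** \<eta>) = gip (\<alpha>, \<beta>) (X ** \<eta> ** transpose X, \<eta>)"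
    using gip_hlie[OF hlie_range[OF sk\<eta>], of \<alpha> \<beta>] by (simp add: \<eta>_def)
  then have "\<eta> = 0"
    using orth[OF hlie_range[OF sk\<eta>]] skew_trace_square_eq_0[OF sk\<eta>] by simp
  define C where "C = perp_proj X ** \<alpha> ** perp_proj X"
  have skC: "skew C"
    using skew_conjugate[OF sk(1), of "perp_proj X"] by (simp add: C_def transpose_perp_proj)
  have "perp_proj X ** C ** perp_proj X = C"
    by (simp add: C_def matrix_mul_assoc[symmetric] perp_proj_idem)
  then have "trace (C ** C) = - gip (\<alpha>, \<beta>) (perp_proj X ** C ** perp_proj X, 0)"
    using gip_hlie[OF hlie_perp[OF skC], of \<alpha> \<beta>] by (simp add: C_def)
  then have "C = 0"
    using orth[OF hlie_perp[OF skC]] skew_trace_square_eq_0[OF skC] by simp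
  with \<open>\<eta> = 0\<close> sk show "skew \<alpha> \<and> skew \<beta> \<and>
     transpose X ** \<alpha> ** X = 2 *\<^sub>R \<beta> \<and> perp_proj X ** \<alpha> ** perp_proj X = 0"
    by (simp add: \<eta>_def C_def)
next
  assume "skew \<alpha> \<and> skew \<beta> \<and>
     transpose X ** \<alpha> ** X = 2 *\<^sub>R \<beta> \<and> perp_proj X ** \<alpha> ** perp_proj X = 0"
  then show "(\<alpha>, \<beta>) \<in> plie X"
    by (auto simp: plie_def gip_hlie)
qed

lemma hlie_inter_plie: "z \<in> hlie X \<Longrightarrow> z \<in> plie X \<Longrightarrow> z = 0"
proof (cases z)
  case (Pair \<Omega> \<mu>)
  assume h: "z \<in> hlie X" and p: "z \<in> plie X"
  have "transpose X ** \<Omega> ** X = \<mu>"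
    using h Pair by (simp add: hlie_def matrix_mul_assoc[symmetric] stiefel_cancel)
  moreover have "transpose X ** \<Omega> ** X = 2 *\<^sub>R \<mu>" "perp_proj X ** \<Omega> ** perp_proj X = 0"
    using p Pair by (simp_all add: plie_iff)
  ultimately have "\<mu> = 0" by (simp add: scaleR_2)
  with hlie_decomp[of \<Omega> \<mu>] h Pair \<open>perp_proj X ** \<Omega> ** perp_proj X = 0\<close> show "z = 0"
    by (simp add: zero_prod_def)
qed

lemma hproj_in_hlie:
  assumes "skew (fst \<xi>)" "skew (snd \<xi>)"
  shows "hproj X \<xi> \<in> hlie X"
proof -
  have "skew (hproj_snd X \<xi>)"
    using assms skew_conjugate[of "fst \<xi>" "transpose X"]
    by (simp add: hproj_snd_def skew_diff skew_scaleR)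
  then show ?thesis
    using hlie_add[OF hlie_range hlie_perp[OF assms(1)]] by (simp add: hproj_def)
qed

lemma diff_hproj_in_plie:
  assumes "skew (fst \<xi>)" "skew (snd \<xi>)"
  shows "\<xi> - hproj X \<xi> \<in> plie X"
proof -
  have "skew (fst (hproj X \<xi>))" "skew (snd (hproj X \<xi>))"
    using hproj_in_hlie[OF assms] by (simp_all add: hlie_iff)
  moreover have "transpose X ** fst (hproj X \<xi>) ** X = hproj_snd X \<xi>"
    by (simp add: hproj_def matrix_add_ldistrib matrix_add_rdistrib matrix_mul_assoc[symmetric]
        perp_proj_simps)
  moreover have "perp_proj X ** fst (hproj X \<xi>) ** perp_proj X = perp_proj X ** fst \<xi> ** perp_proj X"
    by (simp add: hproj_def matrix_add_ldistrib matrix_add_rdistrib matrix_mul_assoc[symmetric]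
        perp_proj_simps)
  ultimately have "(fst \<xi> - fst (hproj X \<xi>), snd \<xi> - snd (hproj X \<xi>)) \<in> plie X"
    using assms
    by (simp add: plie_iff skew_diff matrix_diff_ldistrib matrix_diff_rdistrib)
      (simp add: hproj_def hproj_snd_def algebra_simps scaleR_2)
  then show ?thesis by (simp add: Pair_diff_fst_snd)
qed

lemma hcomp_eq_hproj:
  assumes "skew (fst \<xi>)" "skew (snd \<xi>)"
  shows "hcomp X \<xi> = hproj X \<xi>"
  unfolding hcomp_def
proof (rule the_equality)
  show "hproj X \<xi> \<in> hlie X \<and> (fst \<xi> - fst (hproj X \<xi>), snd \<xi> - snd (hproj X \<xi>)) \<in> plie X"
    using hproj_in_hlie[OF assms] diff_hproj_in_plie[OF assms] by (simp add: Pair_diff_fst_snd)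
next
  fix \<zeta> assume "\<zeta> \<in> hlie X \<and> (fst \<xi> - fst \<zeta>, snd \<xi> - snd \<zeta>) \<in> plie X"
  then have h: "\<zeta> \<in> hlie X" and p: "\<xi> - \<zeta> \<in> plie X" by (simp_all add: Pair_diff_fst_snd)
  have "\<zeta> - hproj X \<xi> \<in> hlie X" by (rule hlie_diff[OF h hproj_in_hlie[OF assms]])
  moreover have "\<zeta> - hproj X \<xi> \<in> plie X"
    using plie_diff[OF diff_hproj_in_plie[OF assms] p] by simp
  ultimately show "\<zeta> = hproj X \<xi>"
    using hlie_inter_plie by fastforce
qed

lemma hcomp_in_hlie: "skew (fst \<xi>) \<Longrightarrow> skew (snd \<xi>) \<Longrightarrow> hcomp X \<xi> \<in> hlie X"
  by (simp add: hcomp_eq_hproj hproj_in_hlie)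

lemma pcomp_in_plie: "skew (fst \<xi>) \<Longrightarrow> skew (snd \<xi>) \<Longrightarrow> pcomp X \<xi> \<in> plie X"
  by (simp add: pcomp_eq hcomp_eq_hproj diff_hproj_in_plie)

end

section \<open>Curves in \<open>G\<close>\<close>

lemma has_vector_derivative_mexp_mult_mexp_neg:
  "((\<lambda>t. mexp (t *\<^sub>R A) ** mexp (- (t *\<^sub>R B))) has_vector_derivative
     mexp (t *\<^sub>R A) ** mexp (- (t *\<^sub>R B)) **
       (mexp (t *\<^sub>R B) ** (A - B) ** mexp (- (t *\<^sub>R B)))) (at t)"
proof -
  have "((\<lambda>t. mexp (t *\<^sub>R - B)) has_vector_derivative mexp (t *\<^sub>R - B) ** - B) (at t)"
    by (rule has_vector_derivative_mexp)
  then have dB: "((\<lambda>t. mexp (- (t *\<^sub>R B))) has_vector_derivative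
      - (mexp (- (t *\<^sub>R B)) ** B)) (at t)"
    by (simp add: matrix_uminus_right)
  have comm: "mexp (- (t *\<^sub>R B)) ** B = B ** mexp (- (t *\<^sub>R B))"
    by (rule mexp_intertwine)
      (simp add: matrix_uminus_left matrix_uminus_right scalar_matrix_assoc[symmetric] matrix_scalar_ac)
  have "mexp (t *\<^sub>R A) ** mexp (- (t *\<^sub>R B)) **
      (mexp (t *\<^sub>R B) ** (A - B) ** mexp (- (t *\<^sub>R B)))
      = mexp (t *\<^sub>R A) ** (A - B) ** mexp (- (t *\<^sub>R B))"
    by (simp add: matrix_mul_assoc[symmetric] matrix_mul_assoc_eq[OF mexp_uminus_inverse(2)])
  also have "\<dots> = mexp (t *\<^sub>R A) ** - (mexp (- (t *\<^sub>R B)) ** B)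
      + mexp (t *\<^sub>R A) ** A ** mexp (- (t *\<^sub>R B))"
    by (simp add: matrix_diff_ldistrib matrix_diff_rdistrib matrix_uminus_right comm
        matrix_mul_assoc)
  finally show ?thesis
    using has_vector_derivative_matrix_mult[OF has_vector_derivative_mexp dB] by simp
qed

lemma has_vector_derivative_transpose_mult:
  fixes q r :: "real \<Rightarrow> real^'n^'n"
  assumes dq: "(q has_vector_derivative q t ** A) (at t)"
    and dr: "(r has_vector_derivative r t ** B) (at t)"
    and A: "skew A" and q: "orthogonal_matrix (q t)" and r: "orthogonal_matrix (r t)"
  shows "((\<lambda>t. transpose (q t) ** r t) has_vector_derivative
     transpose (q t) ** r t **
       (B - transpose (transpose (q t) ** r t) ** A ** (transpose (q t) ** r t))) (at t)"
proof -
  let ?s = "transpose (q t) ** r t"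
  have "?s ** transpose ?s = mat 1"
    using orthogonal_matrix_mul[of "transpose (q t)" "r t"] q r by (simp add: orthogonal_matrix_def)
  then have "?s ** (transpose ?s ** A ** ?s) = A ** ?s"
    by (simp add: matrix_mul_assoc)
  then have "?s ** (B - transpose ?s ** A ** ?s) = transpose (q t) ** (r t ** B) + transpose (q t ** A) ** r t"
    using A by (simp add: matrix_diff_ldistrib skew_def matrix_transpose_mul matrix_uminus_left
        matrix_mul_assoc)
  then show ?thesis
    using has_vector_derivative_matrix_mult[OF has_vector_derivative_transpose[OF dq] dr] by simp
qed

lemma left_invariant_ode_unique:
  fixes q :: "real \<Rightarrow> real^'n^'n"
  assumes dr: "\<And>t. (r has_vector_derivative r t ** V t) (at t)"
    and dq: "\<And>t. (q has_vector_derivative q t ** V t) (at t)"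
    and V: "\<And>t. skew (V t)" and q: "\<And>t. orthogonal_matrix (q t)" and init: "r 0 = q 0"
  shows "r t = q t"
proof -
  have "((\<lambda>t. r t ** transpose (q t)) has_vector_derivative 0) (at t within UNIV)" for t
  proof -
    have "r t ** transpose (q t ** V t) + r t ** V t ** transpose (q t) = 0"
      using V[of t]
      by (simp add: skew_def matrix_transpose_mul matrix_uminus_left matrix_uminus_right matrix_mul_assoc)
    then show ?thesis
      using has_vector_derivative_matrix_mult[OF dr[of t] has_vector_derivative_transpose[OF dq[of t]]]
      by simp
  qed
  then obtain c where c: "\<And>t. r t ** transpose (q t) = c"
    using has_vector_derivative_zero_constant[of UNIV "\<lambda>t. r t ** transpose (q t)"] by auto
  have "r t = r t ** transpose (q t) ** q t"
    using q[of t] by (simp add: orthogonal_matrix_def matrix_mul_assoc[symmetric])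
  also have "\<dots> = r 0 ** transpose (q 0) ** q t"
    using c by simp
  also have "\<dots> = q t"
    using q[of 0] init by (simp add: orthogonal_matrix_def)
  finally show ?thesis .
qed

lemma curve_deriv_dL:
  "curve_deriv q (\<lambda>t. dL (q t) (A t)) \<longleftrightarrow>
    (\<forall>t. ((\<lambda>s. fst (q s)) has_vector_derivative fst (q t) ** fst (A t)) (at t) \<and>
         ((\<lambda>s. snd (q s)) has_vector_derivative snd (q t) ** snd (A t)) (at t))"
  by (simp add: curve_deriv_def dL_def gmul_def)

lemma left_invariant_curve_unique:
  assumes dr: "curve_deriv r (\<lambda>t. dL (r t) (V t))" and dq: "curve_deriv q (\<lambda>t. dL (q t) (V t))"
    and q: "\<And>t. q t \<in> Gset" and V: "\<And>t. skew (fst (V t)) \<and> skew (snd (V t))"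
    and init: "r 0 = q 0"
  shows "r = q"
proof -
  have "fst (r t) = fst (q t)" for t
    by (rule left_invariant_ode_unique[where r = "\<lambda>t. fst (r t)" and q = "\<lambda>t. fst (q t)"
          and V = "\<lambda>t. fst (V t)"])
      (use dr dq q V init in \<open>simp_all add: curve_deriv_dL Gset_def\<close>)
  moreover have "snd (r t) = snd (q t)" for t
    by (rule left_invariant_ode_unique[where r = "\<lambda>t. snd (r t)" and q = "\<lambda>t. snd (q t)"
          and V = "\<lambda>t. snd (V t)"])
      (use dr dq q V init in \<open>simp_all add: curve_deriv_dL Gset_def\<close>)
  ultimately show ?thesis by (simp add: fun_eq_iff prod_eq_iff)
qed

lemma horizontal_lift_left_trivialized:
  assumes "horizontal_lift X b g0 q"
  obtains A where "\<And>t. A t \<in> plie X" "curve_deriv q (\<lambda>t. dL (q t) (A t))"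
proof -
  obtain q' where q: "\<And>t. q t \<in> Gset" and dq: "curve_deriv q q'"
    and p: "\<And>t. gmul (ginv (q t)) (q' t) \<in> plie X"
    using assms by (auto simp: horizontal_lift_def)
  have "q' = (\<lambda>t. dL (q t) (gmul (ginv (q t)) (q' t)))"
    using q by (simp add: fun_eq_iff dL_def gmul_ginv_cancel)
  with dq p show thesis
    by (intro that[of "\<lambda>t. gmul (ginv (q t)) (q' t)"]) auto
qed

lemma curve_deriv_ginv_gmul:
  assumes dq: "curve_deriv q (\<lambda>t. dL (q t) (A t))" and dr: "curve_deriv r (\<lambda>t. dL (r t) (B t))"
    and q: "\<And>t. q t \<in> Gset" and r: "\<And>t. r t \<in> Gset"
    and A: "\<And>t. skew (fst (A t)) \<and> skew (snd (A t))"
    and s: "\<And>t. s t = gmul (ginv (q t)) (r t)"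
  shows "curve_deriv s (\<lambda>t. dL (s t) (B t - Ad (ginv (s t)) (A t)))"
proof -
  have s_eq: "s t = (transpose (fst (q t)) ** fst (r t), transpose (snd (q t)) ** snd (r t))" for t
    using q by (simp add: s gmul_def ginv_Gset)
  have "s t \<in> Gset" for t
    using q r by (simp add: s Gset_gmul Gset_ginv)
  then have Ad: "Ad (ginv (s t)) (A t) =
      (transpose (fst (s t)) ** fst (A t) ** fst (s t), transpose (snd (s t)) ** snd (A t) ** snd (s t))"
    for t by (simp add: Ad_Gset ginv_Gset Gset_def)
  show ?thesis
    unfolding curve_deriv_dL
  proof (intro allI conjI)
    fix t
    show "((\<lambda>t. fst (s t)) has_vector_derivative fst (s t) ** fst (B t - Ad (ginv (s t)) (A t))) (at t)"
      using has_vector_derivative_transpose_mult[of "\<lambda>t. fst (q t)" t "fst (A t)" "\<lambda>t. fst (r t)" "fst (B t)"]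
        dq dr q r A
      unfolding Ad by (simp add: s_eq curve_deriv_dL Gset_def)
    show "((\<lambda>t. snd (s t)) has_vector_derivative snd (s t) ** snd (B t - Ad (ginv (s t)) (A t))) (at t)"
      using has_vector_derivative_transpose_mult[of "\<lambda>t. snd (q t)" t "snd (A t)" "\<lambda>t. snd (r t)" "snd (B t)"]
        dq dr q r A
      unfolding Ad by (simp add: s_eq curve_deriv_dL Gset_def)
  qed
qed

lemma stabilizer_horizontal_curve_const:
  assumes X: "X \<in> stiefel" and s: "\<And>t. s t \<in> stabilizer X"
    and ds: "curve_deriv s (\<lambda>t. dL (s t) (M t))" and M: "\<And>t. M t \<in> plie X"
  shows "s t = s 0"
proof -
  have d1: "((\<lambda>t. fst (s t)) has_vector_derivative fst (s t) ** fst (M t)) (at t)"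
    and d2: "((\<lambda>t. snd (s t)) has_vector_derivative snd (s t) ** snd (M t)) (at t)" for t
    using ds by (simp_all add: curve_deriv_dL)
  have "M t \<in> hlie X" for t
  proof -
    have S: "orthogonal_matrix (fst (s t))" and sX: "\<And>t. fst (s t) ** X = X ** snd (s t)"
      using s by (simp_all add: stabilizer_iff Gset_def)
    have "fst (s t) ** (fst (M t) ** X) = fst (s t) ** (X ** snd (M t))"
      using intertwining_has_vector_derivative[OF d1 d2 sX] by (simp add: matrix_mul_assoc sX)
    then have "fst (M t) ** X = X ** snd (M t)"
      by (metis orthogonal_matrix_cancel(1)[OF S])
    then show ?thesis using M[of t] by (simp add: hlie_iff plie_skew)
  qed
  then have "M t = 0" for t using hlie_inter_plie[OF X] M by blast
  then have "((\<lambda>t. fst (s t)) has_vector_derivative 0) (at t within UNIV)"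
    "((\<lambda>t. snd (s t)) has_vector_derivative 0) (at t within UNIV)" for t
    using d1[of t] d2[of t] by simp_all
  then obtain c1 c2 where "\<And>t. fst (s t) = c1" "\<And>t. snd (s t) = c2"
    using has_vector_derivative_zero_constant[of UNIV "\<lambda>t. fst (s t)"]
      has_vector_derivative_zero_constant[of UNIV "\<lambda>t. snd (s t)"]
    by (metis convex_UNIV UNIV_I)
  then show ?thesis by (simp add: prod_eq_iff)
qed

lemma horizontal_lift_unique:
  assumes X: "X \<in> stiefel" and q: "horizontal_lift X b g0 q" and r: "horizontal_lift X b g0 r"
  shows "r = q"
proof -
  obtain A where A: "\<And>t. A t \<in> plie X" and dq: "curve_deriv q (\<lambda>t. dL (q t) (A t))"
    using horizontal_lift_left_trivialized[OF q] by metis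
  obtain B where B: "\<And>t. B t \<in> plie X" and dr: "curve_deriv r (\<lambda>t. dL (r t) (B t))"
    using horizontal_lift_left_trivialized[OF r] by metis
  have Gq: "\<And>t. q t \<in> Gset" and Gr: "\<And>t. r t \<in> Gset" and init: "r 0 = q 0"
    and iota: "\<And>t. iotapi X (r t) = iotapi X (q t)"
    using q r by (auto simp: horizontal_lift_def)
  define s where "s t = gmul (ginv (q t)) (r t)" for t
  have stab: "s t \<in> stabilizer X" for t
    unfolding s_def by (rule gmul_ginv_in_stabilizer[OF Gq Gr iota])
  have "curve_deriv s (\<lambda>t. dL (s t) (B t - Ad (ginv (s t)) (A t)))"
    by (rule curve_deriv_ginv_gmul[OF dq dr Gq Gr _ s_def]) (use A plie_skew in blast)
  then have "s t = s 0" for t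
    by (rule stabilizer_horizontal_curve_const[OF X stab])
      (intro plie_diff B plie_Ad stabilizer_ginv stab A)
  also have "s 0 = gone"
    using Gq[of 0] by (simp add: s_def init gone_def gmul_def ginv_Gset Gset_def orthogonal_matrix_def)
  finally have "r t = gmul (q t) gone" for t
    using Gq[of t] by (metis s_def gmul_ginv_cancel(2))
  then show ?thesis by (simp add: fun_eq_iff gmul_def gone_def)
qed

lemma gexp_gscale_in_Gset: "skew (fst \<zeta>) \<Longrightarrow> skew (snd \<zeta>) \<Longrightarrow> gexp (gscale t \<zeta>) \<in> Gset"
  by (simp add: Gset_def gexp_def gscale_def orthogonal_matrix_mexp skew_scaleR)

lemma gexp_gscale_in_stabilizer:
  assumes "\<zeta> \<in> hlie X"
  shows "gexp (gscale t \<zeta>) \<in> stabilizer X"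
proof -
  have "(t *\<^sub>R fst \<zeta>) ** X = X ** (t *\<^sub>R snd \<zeta>)"
    using assms by (simp add: hlie_iff scalar_matrix_assoc[symmetric] matrix_scalar_ac)
  then show ?thesis
    using assms gexp_gscale_in_Gset[of \<zeta> t]
    by (simp add: stabilizer_iff hlie_iff gexp_def gscale_def mexp_intertwine)
qed

lemma curve_deriv_gexp_mult_gexp_neg:
  assumes "skew (fst \<zeta>)" "skew (snd \<zeta>)"
  shows "curve_deriv (\<lambda>t. gmul (gexp (gscale t \<xi>)) (gexp (gscale (- t) \<zeta>)))
    (\<lambda>t. dL (gmul (gexp (gscale t \<xi>)) (gexp (gscale (- t) \<zeta>))) (Ad (gexp (gscale t \<zeta>)) (\<xi> - \<zeta>)))"
proof -
  have "Ad (gexp (gscale t \<zeta>)) (\<xi> - \<zeta>) =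
      (mexp (t *\<^sub>R fst \<zeta>) ** (fst \<xi> - fst \<zeta>) ** mexp (- (t *\<^sub>R fst \<zeta>)),
       mexp (t *\<^sub>R snd \<zeta>) ** (snd \<xi> - snd \<zeta>) ** mexp (- (t *\<^sub>R snd \<zeta>)))" for t
    using Ad_Gset[OF gexp_gscale_in_Gset[OF assms]] assms
    by (simp add: gexp_def gscale_def transpose_mexp_skew skew_scaleR)
  then show ?thesis
    by (simp add: curve_deriv_dL gmul_def gexp_def gscale_def has_vector_derivative_mexp_mult_mexp_neg)
qed

lemma horizontal_lift_exp:
  assumes X: "X \<in> stiefel" and \<xi>: "skew (fst \<xi>)" "skew (snd \<xi>)"
  defines "V \<equiv> \<lambda>t. Ad (gexp (gscale t (hcomp X \<xi>))) (pcomp X \<xi>)"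
    and "q \<equiv> \<lambda>t. gmul (gexp (gscale t \<xi>)) (gexp (gscale (- t) (hcomp X \<xi>)))"
  shows "curve_deriv q (\<lambda>t. dL (q t) (V t))" and "\<And>t. V t \<in> plie X"
    and "horizontal_lift X (\<lambda>t. iotapi X (gexp (gscale t \<xi>))) gone q"
proof -
  have h: "hcomp X \<xi> \<in> hlie X" by (rule hcomp_in_hlie[OF X \<xi>])
  then have skew_h: "skew (fst (hcomp X \<xi>))" "skew (snd (hcomp X \<xi>))" by (simp_all add: hlie_iff)
  show V: "V t \<in> plie X" for t
    unfolding V_def by (rule plie_Ad[OF gexp_gscale_in_stabilizer[OF h] pcomp_in_plie[OF X \<xi>]])
  show dq: "curve_deriv q (\<lambda>t. dL (q t) (V t))"
    unfolding q_def V_def pcomp_eq by (rule curve_deriv_gexp_mult_gexp_neg[OF skew_h])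
  have Gq: "q t \<in> Gset" for t
    unfolding q_def by (intro Gset_gmul gexp_gscale_in_Gset \<xi> skew_h)
  show "horizontal_lift X (\<lambda>t. iotapi X (gexp (gscale t \<xi>))) gone q"
    unfolding horizontal_lift_def
  proof (intro conjI allI exI)
    show "q 0 = gone" by (simp add: q_def gone_def gmul_def gexp_def gscale_def mexp_zero)
    show "q t \<in> Gset" for t by (rule Gq)
    show "curve_deriv q (\<lambda>t. dL (q t) (V t))" by (rule dq)
    show "iotapi X (q t) = iotapi X (gexp (gscale t \<xi>))" for t
      unfolding q_def by (rule iotapi_gmul_stabilizer[OF gexp_gscale_in_stabilizer[OF h]])
    show "gmul (ginv (q t)) (dL (q t) (V t)) \<in> plie X" for t
      using V by (simp add: dL_def gmul_ginv_cancel[OF Gq])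
  qed
qed

theorem lemma5p12:
  fixes X :: "real^'k^'n" and \<xi> :: "('n,'k) gelt"
  assumes X: "X \<in> stiefel"
    and xi: "skew (fst \<xi>)" "skew (snd \<xi>)"
  defines "bhat \<equiv> (\<lambda>t. iotapi X (gexp (gscale t \<xi>)))"
    and "q \<equiv> (\<lambda>t. gmul (gexp (gscale t \<xi>)) (gexp (gscale (- t) (hcomp X \<xi>))))"
  shows "(\<forall>t. bhat t = mexp (t *\<^sub>R fst \<xi>) ** X ** mexp (- t *\<^sub>R snd \<xi>))
    \<and> (\<forall>t. q t = (mexp (t *\<^sub>R fst \<xi>) ** mexp (- t *\<^sub>R fst (hcomp X \<xi>)),
                   mexp (t *\<^sub>R snd \<xi>) ** mexp (- t *\<^sub>R snd (hcomp X \<xi>))))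
    \<and> horizontal_lift X bhat gone q
    \<and> (\<forall>r. horizontal_lift X bhat gone r \<longrightarrow> r = q)
    \<and> curve_deriv q (\<lambda>t. dL (q t) (Ad (gexp (gscale t (hcomp X \<xi>))) (pcomp X \<xi>)))
    \<and> (\<forall>r. r 0 = gone \<and> curve_deriv r (\<lambda>t. dL (r t) (Ad (gexp (gscale t (hcomp X \<xi>))) (pcomp X \<xi>)))
           \<longrightarrow> r = q)"
proof -
  note lift = horizontal_lift_exp[OF X xi, folded bhat_def q_def]
  have dq: "curve_deriv q (\<lambda>t. dL (q t) (Ad (gexp (gscale t (hcomp X \<xi>))) (pcomp X \<xi>)))"
    using lift(1) by (simp add: q_def)
  have Gq: "\<And>t. q t \<in> Gset"
    using lift(3) by (simp add: horizontal_lift_def)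
  show ?thesis
  proof (intro conjI allI impI)
    show "bhat t = mexp (t *\<^sub>R fst \<xi>) ** X ** mexp (- t *\<^sub>R snd \<xi>)" for t
      using xi by (simp add: bhat_def iotapi_def gexp_def gscale_def transpose_mexp_skew skew_scaleR)
    show "q t = (mexp (t *\<^sub>R fst \<xi>) ** mexp (- t *\<^sub>R fst (hcomp X \<xi>)),
        mexp (t *\<^sub>R snd \<xi>) ** mexp (- t *\<^sub>R snd (hcomp X \<xi>)))" for t
      by (simp add: q_def gmul_def gexp_def gscale_def)
    show "horizontal_lift X bhat gone q" by (rule lift(3))
    show "r = q" if "horizontal_lift X bhat gone r" for r
      by (rule horizontal_lift_unique[OF X lift(3) that])
    show "curve_deriv q (\<lambda>t. dL (q t) (Ad (gexp (gscale t (hcomp X \<xi>))) (pcomp X \<xi>)))"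
      by (rule dq)
    show "r = q"
      if "r 0 = gone \<and> curve_deriv r (\<lambda>t. dL (r t) (Ad (gexp (gscale t (hcomp X \<xi>))) (pcomp X \<xi>)))"
      for r
      by (rule left_invariant_curve_unique[OF _ dq Gq])
        (use that plie_skew[OF lift(2)] lift(3) in \<open>auto simp: horizontal_lift_def\<close>)
  qed
qed

end
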